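(* Let $A,B\in\mathscr{Q}$ be disjoint option sets and let $K$ be a coherent set of desirable option sets. Then $(A\cup B)-u\in K$ for all $u\in A$ if and only if $B-u\in K$ for all $u\in A$.
   Context: Let $\mathcal{X}$ be a nonempty set and let $\mathscr{V}$ be the real vector space of all functions $u:\mathcal{X}\to\mathbb{R}$ (options), with pointwise operations. For $u,v\in\mathscr{V}$, $u\le v$ iff $u(x)\le v(x)$ for all $x\in\mathcal{X}$, and $u<v$ iff $u\le v$ and $u\neq v$. Let $\mathscr{V}_{>0}=\{u\in\mathscr{V}:0<u\}$ and $\mathscr{V}^s_{>0}=\{\{u\}:u\in\mathscr{V}_{>0}\}$. Let $\mathscr{Q}$ be the set of all finite subsets of $\mathscr{V}$ (including $\emptyset$). For $A\in\mathscr{Q}$ and $u\in\mathscr{V}$, $A-u=\{v-u:v\in A\}$. For a positive integer $n$, $\mathbb{R}^{n,+}=\{\boldsymbol\lambda\in\mathbb{R}^n:\lambda_j\ge0\ \forall j,\ \sum_j\lambda_j>0\}$, and for $\boldsymbol\lambda\in\mathbb{R}^n$, $\mathbf u=(u_1,\dots,u_n)\in\mathscr{V}^n$, $\boldsymbol\lambda\mathbf u=\sum_{j=1}^n\lambda_ju_j$. A set of desirable option sets is any $K\subseteq\mathscr{Q}$. It is coherent if for all $A,B\in K$: (K0) $A\setminus\{0\}\in K$; (K1) $\{0\}\notin K$; (K2) $\mathscr{V}^s_{>0}\subseteq K$; (K3) $\{\boldsymbol\lambda(\mathbf u)\mathbf u:\mathbf u\in A\times B\}\in K$ for every map $\boldsymbol\lambda:A\times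 B\to\mathbb{R}^{2,+}$; (K4) $A\cup Q\in K$ for all $Q\in\mathscr{Q}$. *)

theory Defs
  imports Complex_Main
begin

type_synonym 'x opt = "'x \<Rightarrow> real"

definition opt_le :: "'x opt \<Rightarrow> 'x opt \<Rightarrow> bool" where
  "opt_le u v \<longleftrightarrow> (\<forall>x. u x \<le> v x)"

definition opt_lt :: "'x opt \<Rightarrow> 'x opt \<Rightarrow> bool" where
  "opt_lt u v \<longleftrightarrow> opt_le u v \<and> u \<noteq> v"

definition opt_zero :: "'x opt" where
  "opt_zero = (\<lambda>x. 0)"

definition Vpos :: "'x opt set" where
  "Vpos = {u. opt_lt opt_zero u}"

definition Vpos_s :: "'x opt set set" where
  "Vpos_s = {{u} | u. u \<in> Vpos}"

definition shift :: "'x opt set \<Rightarrow> 'x opt \<Rightarrow> 'x opt set" where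
  "shift A u = (\<lambda>v. (\<lambda>x. v x - u x)) ` A"

definition posR2 :: "real \<times> real \<Rightarrow> bool" where
  "posR2 l \<longleftrightarrow> fst l \<ge> 0 \<and> snd l \<ge> 0 \<and> fst l + snd l > 0"

definition comb_set ::
  "'x opt set \<Rightarrow> 'x opt set \<Rightarrow> ('x opt \<times> 'x opt \<Rightarrow> real \<times> real) \<Rightarrow> 'x opt set" where
  "comb_set A B lam =
     (\<lambda>(u, v). (\<lambda>x. fst (lam (u, v)) * u x + snd (lam (u, v)) * v x)) ` (A \<times> B)"

definition coherent :: "'x opt set set \<Rightarrow> bool" where
  "coherent K \<longleftrightarrow>
     (\<forall>A\<in>K. finite A) \<and>
     (\<forall>A\<in>K. A - {opt_zero} \<in> K) \<and>
     {opt_zero} \<notin> K \<and>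
     Vpos_s \<subseteq> K \<and>
     (\<forall>A\<in>K. \<forall>B\<in>K. \<forall>lam. (\<forall>w\<in>A \<times> B. posR2 (lam w)) \<longrightarrow> comb_set A B lam \<in> K) \<and>
     (\<forall>A\<in>K. \<forall>Q. finite Q \<longrightarrow> A \<union> Q \<in> K)"

end

theory Submission
  imports Defs
begin

text \<open>The nontrivial direction removes the options of A one at a time from A \<union> B.
  To remove a from the set S - u, combine S - u with (S - {a}) - a, obtained from S - a by
  discarding zero, using the weights (1,1) on the option a - u and (1,0) elsewhere: then
  (a - u) + (y - a) = y - u, so every combination is an option of (S - {a}) - u.\<close>

lemma finite_shift [simp]: "finite S \<Longrightarrow> finite (shift S u)"
  unfolding shift_def by simp

lemma shift_Un: "shift (A \<union> B) u = shift A u \<union> shift B u"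
  unfolding shift_def by (rule image_Un)

lemma coherent_Un_finite:
  assumes "coherent K" "X \<in> K" "finite Q"
  shows "X \<union> Q \<in> K"
  using assms unfolding coherent_def by blast

lemma coherent_superset_minus_zero:
  assumes "coherent K" "X \<in> K" "X - {opt_zero} \<subseteq> Y" "finite Y"
  shows "Y \<in> K"
proof -
  have "X - {opt_zero} \<in> K" using assms(1,2) unfolding coherent_def by blast
  then have "(X - {opt_zero}) \<union> Y \<in> K" using assms(1,4) coherent_Un_finite by blast
  moreover have "(X - {opt_zero}) \<union> Y = Y" using assms(3) by blast
  ultimately show ?thesis by simp
qed

lemma coherent_shift_Diff_singleton:
  fixes K :: "'x opt set set"
  assumes coh: "coherent K" and fin: "finite S"
    and Su: "shift S u \<in> K" and Sa: "shift S a \<in> K"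
  shows "shift (S - {a}) u \<in> K"
proof -
  have "shift S a - {opt_zero} \<subseteq> shift (S - {a}) a"
    unfolding shift_def opt_zero_def by auto
  then have Sa': "shift (S - {a}) a \<in> K"
    using coherent_superset_minus_zero[OF coh Sa] fin by simp
  define lam :: "'x opt \<times> 'x opt \<Rightarrow> real \<times> real" where
    "lam = (\<lambda>(p, q). if p = (\<lambda>t. a t - u t) then (1, 1) else (1, 0))"
  have "\<forall>w\<in>shift S u \<times> shift (S - {a}) a. posR2 (lam w)"
    unfolding lam_def posR2_def by (simp add: case_prod_beta)
  then have comb: "comb_set (shift S u) (shift (S - {a}) a) lam \<in> K"
    using coh Su Sa' unfolding coherent_def by blast
  have "comb_set (shift S u) (shift (S - {a}) a) lam \<subseteq> shift (S - {a}) u"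
  proof
    fix z assume "z \<in> comb_set (shift S u) (shift (S - {a}) a) lam"
    then obtain x y where xy: "x \<in> S" "y \<in> S - {a}"
      and z_eq: "z = (\<lambda>t. fst (lam (\<lambda>t. x t - u t, \<lambda>t. y t - a t)) * (x t - u t)
                         + snd (lam (\<lambda>t. x t - u t, \<lambda>t. y t - a t)) * (y t - a t))"
      unfolding comb_set_def shift_def by auto
    show "z \<in> shift (S - {a}) u"
    proof (cases "x = a")
      case True
      then have "z = (\<lambda>t. y t - u t)" unfolding z_eq lam_def by simp
      then show ?thesis using xy unfolding shift_def by blast
    next
      case False
      then have "(\<lambda>t. x t - u t) \<noteq> (\<lambda>t. a t - u t)" by (auto simp: fun_eq_iff)
      then have "z = (\<lambda>t. x t - u t)" unfolding z_eq lam_def by simp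
      then show ?thesis using xy False unfolding shift_def by blast
    qed
  qed
  then have "comb_set (shift S u) (shift (S - {a}) a) lam \<union> shift (S - {a}) u
      = shift (S - {a}) u" by blast
  then show ?thesis
    using coherent_Un_finite[OF coh comb, of "shift (S - {a}) u"] fin by simp
qed

lemma coherent_shift_Diff:
  assumes coh: "coherent K" and fin: "finite S" and "finite D" "D \<subseteq> A"
    and shifts: "\<forall>u\<in>A. shift S u \<in> K"
  shows "\<forall>u\<in>A. shift (S - D) u \<in> K"
  using \<open>finite D\<close> \<open>D \<subseteq> A\<close>
proof (induction D rule: finite_induct)
  case empty
  then show ?case using shifts by simp
next
  case (insert a D)
  then have IH: "\<forall>u\<in>A. shift (S - D) u \<in> K" and "a \<in> A" by auto
  have "shift (S - D - {a}) u \<in> K" if "u \<in> A" for u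
    using coherent_shift_Diff_singleton[OF coh _ ] fin IH \<open>a \<in> A\<close> that by blast
  moreover have "S - D - {a} = S - insert a D" by blast
  ultimately show ?case by simp
qed

theorem mainTheorem15:
  fixes K :: "'x opt set set" and A B :: "'x opt set"
  assumes "coherent K" and "finite A" and "finite B" and "A \<inter> B = {}"
  shows "(\<forall>u\<in>A. shift (A \<union> B) u \<in> K) \<longleftrightarrow> (\<forall>u\<in>A. shift B u \<in> K)"
proof
  assume "\<forall>u\<in>A. shift (A \<union> B) u \<in> K"
  then have "\<forall>u\<in>A. shift (A \<union> B - A) u \<in> K"
    using coherent_shift_Diff[OF assms(1) _ assms(2)] assms(2,3) by blast
  moreover have "A \<union> B - A = B" using assms(4) by blast
  ultimately show "\<forall>u\<in>A. shift B u \<in> K" by simp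
next
  assume B_shifts: "\<forall>u\<in>A. shift B u \<in> K"
  show "\<forall>u\<in>A. shift (A \<union> B) u \<in> K"
  proof
    fix u assume "u \<in> A"
    then have "shift B u \<union> shift A u \<in> K"
      using coherent_Un_finite[OF assms(1)] B_shifts assms(2) by simp
    then show "shift (A \<union> B) u \<in> K" by (simp add: shift_Un Un_commute)
  qed
qed

end
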